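(* Let $\Phi\colon\mathcal{M}(2;\mathbb{C})\to\mathcal{M}(2;\mathbb{C})$ be a polynomial automorphism compatible with conjugation. Then the restriction $\Phi_{|\mathcal{D}}$ (identified with a polynomial automorphism of $\mathbb{C}^2$) is an elementary automorphism; in particular $\Phi$ preserves a polynomial fibration $\mathcal{L}\colon\mathcal{M}(2;\mathbb{C})\to\mathbb{C}$ transverse to $\mathcal{D}$, in the sense that $\mathcal{L}_{|\mathcal{D}}\colon\mathcal{D}\to\mathbb{C}$ is nonconstant.
   Context: $\mathcal{M}(2;\mathbb{C})$ is the space of complex $2\times2$ matrices and $\mathcal{D}=\{\mathrm{diag}(\lambda_1,\lambda_2)\}\simeq\mathbb{C}^2$ the diagonal matrices. A rational map $\Phi$ is compatible with conjugation if $\mathrm{A}\Phi(\mathrm{M})\mathrm{A}^{-1}=\Phi(\mathrm{A}\mathrm{M}\mathrm{A}^{-1})$ for all $\mathrm{A}\in\mathrm{GL}(2;\mathbb{C})$ whenever $\mathrm{M}$ and $\mathrm{A}\mathrm{M}\mathrm{A}^{-1}$ lie outside the indeterminacy locus of $\Phi$. Such a $\Phi$ maps $\mathcal{D}$ into $\mathcal{D}$. An elementary automorphism of $\mathbb{C}^2$ is one conjugate in the group of polynomial automorphisms to a map $(x,y)\mapsto(\alpha x+P(y),\beta y+\gamma)$ with $\alpha,\beta\in\mathbb{C}^*$, $\gamma\in\mathbb{C}$, $P\in\mathbb{C}[y]$. $\Phi$ preserves the fibration given by $\mathcal{L}$ if the foliation by level sets of $\mathcal{L}$ is invariant by $\Phi$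 (i.e. $\Phi$ maps level sets of $\mathcal{L}$ into level sets of $\mathcal{L}$). *)

theory Defs
  imports "HOL-Analysis.Analysis" "HOL-Computational_Algebra.Polynomial"
begin

type_synonym mat2 = "complex^2^2"

inductive poly_fun_M :: "(mat2 \<Rightarrow> complex) \<Rightarrow> bool" where
  pM_const: "poly_fun_M (\<lambda>M. c)"
| pM_coord: "poly_fun_M (\<lambda>M. M $ i $ j)"
| pM_add: "poly_fun_M f \<Longrightarrow> poly_fun_M g \<Longrightarrow> poly_fun_M (\<lambda>M. f M + g M)"
| pM_mult: "poly_fun_M f \<Longrightarrow> poly_fun_M g \<Longrightarrow> poly_fun_M (\<lambda>M. f M * g M)"

inductive poly_fun_C2 :: "(complex \<times> complex \<Rightarrow> complex) \<Rightarrow> bool" where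
  pC_const: "poly_fun_C2 (\<lambda>p. c)"
| pC_fst: "poly_fun_C2 fst"
| pC_snd: "poly_fun_C2 snd"
| pC_add: "poly_fun_C2 f \<Longrightarrow> poly_fun_C2 g \<Longrightarrow> poly_fun_C2 (\<lambda>p. f p + g p)"
| pC_mult: "poly_fun_C2 f \<Longrightarrow> poly_fun_C2 g \<Longrightarrow> poly_fun_C2 (\<lambda>p. f p * g p)"

definition poly_map_M :: "(mat2 \<Rightarrow> mat2) \<Rightarrow> bool" where
  "poly_map_M \<Phi> \<longleftrightarrow> (\<forall>i j. poly_fun_M (\<lambda>M. \<Phi> M $ i $ j))"

definition poly_map_C2 :: "(complex \<times> complex \<Rightarrow> complex \<times> complex) \<Rightarrow> bool" where
  "poly_map_C2 f \<longleftrightarrow> poly_fun_C2 (\<lambda>p. fst (f p)) \<and> poly_fun_C2 (\<lambda>p. snd (f p))"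

definition poly_aut_M :: "(mat2 \<Rightarrow> mat2) \<Rightarrow> bool" where
  "poly_aut_M \<Phi> \<longleftrightarrow> poly_map_M \<Phi> \<and>
     (\<exists>\<Psi>. poly_map_M \<Psi> \<and> (\<forall>M. \<Psi> (\<Phi> M) = M) \<and> (\<forall>M. \<Phi> (\<Psi> M) = M))"

definition poly_aut_C2 :: "(complex \<times> complex \<Rightarrow> complex \<times> complex) \<Rightarrow> bool" where
  "poly_aut_C2 f \<longleftrightarrow> poly_map_C2 f \<and>
     (\<exists>g. poly_map_C2 g \<and> (\<forall>p. g (f p) = p) \<and> (\<forall>p. f (g p) = p))"

text \<open>Compatibility with conjugation (a polynomial map has empty indeterminacy locus).\<close>
definition compatible_conj :: "(mat2 \<Rightarrow> mat2) \<Rightarrow> bool" where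
  "compatible_conj \<Phi> \<longleftrightarrow>
     (\<forall>A M. invertible A \<longrightarrow> A ** \<Phi> M ** matrix_inv A = \<Phi> (A ** M ** matrix_inv A))"

definition diagm :: "complex \<Rightarrow> complex \<Rightarrow> mat2" where
  "diagm a b = (\<chi> i j. if i = j then (if i = 1 then a else b) else 0)"

definition restr_diag :: "(mat2 \<Rightarrow> mat2) \<Rightarrow> complex \<times> complex \<Rightarrow> complex \<times> complex" where
  "restr_diag \<Phi> p = (\<Phi> (diagm (fst p) (snd p)) $ 1 $ 1, \<Phi> (diagm (fst p) (snd p)) $ 2 $ 2)"

definition elementary_aut :: "(complex \<times> complex \<Rightarrow> complex \<times> complex) \<Rightarrow> bool" where
  "elementary_aut f \<longleftrightarrow>
     (\<exists>\<psi> \<psi>i \<alpha> \<beta> \<gamma> (P :: complex poly).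
        poly_aut_C2 \<psi> \<and> (\<forall>p. \<psi>i (\<psi> p) = p) \<and> (\<forall>p. \<psi> (\<psi>i p) = p) \<and>
        \<alpha> \<noteq> 0 \<and> \<beta> \<noteq> 0 \<and>
        (\<forall>p. f p = \<psi>i ((\<lambda>(x, y). (\<alpha> * x + poly P y, \<beta> * y + \<gamma>)) (\<psi> p))))"

definition preserves_fibration :: "(mat2 \<Rightarrow> mat2) \<Rightarrow> (mat2 \<Rightarrow> complex) \<Rightarrow> bool" where
  "preserves_fibration \<Phi> L \<longleftrightarrow> (\<forall>c. \<exists>c'. \<forall>M. L M = c \<longrightarrow> L (\<Phi> M) = c')"

end

theory Submission
  imports Defs "HOL-Computational_Algebra.Fundamental_Theorem_Algebra"
begin

text \<open>
  Conjugating by \<open>diag(1,2)\<close> and by the transposition matrix shows that \<open>\<Phi>\<close> maps \<open>diag(x,y)\<close> to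
  \<open>diag(g(x,y), g(y,x))\<close> for a polynomial \<open>g\<close>, and likewise for \<open>\<Phi>\<^sup>-\<^sup>1\<close> with a polynomial \<open>k\<close>.
  Antisymmetrising \<open>k(g(x,y), g(y,x)) = x\<close> shows that \<open>g(x,y) - g(y,x)\<close> is divisible by \<open>x - y\<close>
  with a quotient that has no zeros, hence equals \<open>\<beta>(x - y)\<close> with \<open>\<beta> \<noteq> 0\<close>. In the coordinates
  \<open>u = x + y\<close>, \<open>v = x - y\<close> the symmetric part \<open>g(x,y) + g(y,x)\<close> is then, for each fixed \<open>v\<close>,
  a polynomial in \<open>u\<close> with a polynomial left inverse, hence affine in \<open>u\<close>; its slope is a
  nowhere vanishing polynomial in \<open>v\<close>, hence a constant \<open>c \<noteq> 0\<close>. So in these coordinates the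
  restriction is \<open>(u,v) \<mapsto> (c u + E(v), \<beta> v)\<close>, which is elementary.
  Finally \<open>\<Phi>\<close> multiplies the discriminant \<open>(tr M)\<^sup>2 - 4 det M\<close> by \<open>\<beta>\<^sup>2\<close>: on diagonalisable
  matrices by the above, and on the others because they commute with a nontrivial unipotent
  matrix, a property that \<open>\<Phi>\<close> preserves. The discriminant thus gives the invariant fibration.
\<close>

section \<open>Polynomial functions on \<open>\<complex>\<^sup>2\<close>\<close>

lemma poly_fun_C2_diff: "poly_fun_C2 f \<Longrightarrow> poly_fun_C2 g \<Longrightarrow> poly_fun_C2 (\<lambda>p. f p - g p)"
  using pC_add[OF _ pC_mult[OF pC_const[of "-1"]]] by fastforce

lemma poly_fun_C2_divide_2: "poly_fun_C2 f \<Longrightarrow> poly_fun_C2 (\<lambda>p. f p / 2)"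
  using pC_mult[OF _ pC_const[of "1/2"]] by fastforce

lemma poly_fun_C2_compose:
  assumes "poly_fun_C2 F" "poly_fun_C2 u" "poly_fun_C2 w"
  shows "poly_fun_C2 (\<lambda>p. F (u p, w p))"
  using assms(1) by induction (auto intro: poly_fun_C2.intros assms)

lemma poly_fun_C2_swap: "poly_fun_C2 F \<Longrightarrow> poly_fun_C2 (\<lambda>p. F (snd p, fst p))"
  by (intro poly_fun_C2_compose pC_fst pC_snd)

lemma poly_fun_C2_on_line:
  assumes "poly_fun_C2 F"
  shows "\<exists>P. \<forall>t. F (a + t * c, b + t * d) = poly P t"
  using assms
proof induction
  case (pC_const c)
  show ?case by (rule exI[of _ "[:c:]"]) simp
next
  case pC_fst
  show ?case by (rule exI[of _ "[:a, c:]"]) simp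
next
  case pC_snd
  show ?case by (rule exI[of _ "[:b, d:]"]) simp
next
  case (pC_add f g)
  then obtain P Q where "\<forall>t. f (a + t * c, b + t * d) = poly P t" "\<forall>t. g (a + t * c, b + t * d) = poly Q t"
    by blast
  then show ?case by (intro exI[of _ "P + Q"]) simp
next
  case (pC_mult f g)
  then obtain P Q where "\<forall>t. f (a + t * c, b + t * d) = poly P t" "\<forall>t. g (a + t * c, b + t * d) = poly Q t"
    by blast
  then show ?case by (intro exI[of _ "P * Q"]) simp
qed

lemma poly_fun_C2_divided_difference:
  assumes "poly_fun_C2 F"
  shows "\<exists>G. poly_fun_C2 G \<and> (\<forall>x y. F (x, y) - F (y, y) = (x - y) * G (x, y))"
  using assms
proof induction
  case (pC_const c)
  show ?case by (intro exI[of _ "\<lambda>p. 0"]) (auto intro: poly_fun_C2.intros)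
next
  case pC_fst
  show ?case by (intro exI[of _ "\<lambda>p. 1"]) (auto intro: poly_fun_C2.intros)
next
  case pC_snd
  show ?case by (intro exI[of _ "\<lambda>p. 0"]) (auto intro: poly_fun_C2.intros)
next
  case (pC_add f g)
  then obtain P Q where "poly_fun_C2 P" "poly_fun_C2 Q"
    "\<forall>x y. f (x, y) - f (y, y) = (x - y) * P (x, y)" "\<forall>x y. g (x, y) - g (y, y) = (x - y) * Q (x, y)"
    by blast
  then show ?case
    by (intro exI[of _ "\<lambda>p. P p + Q p"]) (auto intro: poly_fun_C2.intros simp: add_diff_add distrib_left)
next
  case (pC_mult f g)
  then obtain P Q where P: "poly_fun_C2 P" "\<forall>x y. f (x, y) - f (y, y) = (x - y) * P (x, y)"
    and Q: "poly_fun_C2 Q" "\<forall>x y. g (x, y) - g (y, y) = (x - y) * Q (x, y)"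
    by blast
  have "f (x, y) * g (x, y) - f (y, y) * g (y, y)
      = (x - y) * (f (x, y) * Q (x, y) + g (snd (x, y), snd (x, y)) * P (x, y))" for x y
  proof -
    have "f (x, y) * g (x, y) - f (y, y) * g (y, y)
        = f (x, y) * (g (x, y) - g (y, y)) + g (y, y) * (f (x, y) - f (y, y))"
      by (simp add: algebra_simps)
    then show ?thesis unfolding P(2)[rule_format] Q(2)[rule_format] by (simp add: algebra_simps)
  qed
  moreover have "poly_fun_C2 (\<lambda>p. f p * Q p + g (snd p, snd p) * P p)"
    by (intro poly_fun_C2.pC_add poly_fun_C2.pC_mult pC_mult.hyps P Q poly_fun_C2_compose pC_snd)
  ultimately show ?case by blast
qed

lemma poly_no_roots_constant:
  fixes P :: "complex poly"
  assumes "\<forall>t. poly P t \<noteq> 0"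
  shows "poly P t = poly P 0"
  using fundamental_theorem_of_algebra assms unfolding constant_def by blast

lemma poly_fun_C2_no_zeros_constant:
  assumes "poly_fun_C2 F" "\<forall>p. F p \<noteq> 0"
  shows "F p = F (0, 0)"
proof -
  obtain P where P: "\<forall>t. F (0 + t * fst p, 0 + t * snd p) = poly P t"
    using poly_fun_C2_on_line[OF assms(1)] by blast
  have "\<forall>t. poly P t \<noteq> 0" using P assms(2) by metis
  then have "poly P 1 = poly P 0" by (rule poly_no_roots_constant)
  then show ?thesis using P[rule_format, of 1] P[rule_format, of 0] by simp
qed

lemma poly_fun_C2_zero_off_diagonal:
  assumes "poly_fun_C2 F" "\<forall>x y. x \<noteq> y \<longrightarrow> F (x, y) = 0"
  shows "F p = 0"
proof -
  obtain P where P: "\<forall>t. F (snd p + t * 1, snd p + t * 0) = poly P t"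
    using poly_fun_C2_on_line[OF assms(1)] by blast
  have "poly P t = 0" if "t \<noteq> 0" for t
    using P assms(2) that by (metis add_cancel_left_right mult_1_right mult_zero_right)
  then have "UNIV \<subseteq> insert 0 {t. poly P t = 0}" by blast
  then have "infinite {t. poly P t = 0}"
    using infinite_UNIV_char_0[where 'a=complex] by (metis finite_insert finite_subset)
  then have "P = 0" using poly_roots_finite by blast
  then show ?thesis using P[rule_format, of "fst p - snd p"] by simp
qed

lemma poly_affine_if_left_inverse:
  fixes P Q :: "complex poly"
  assumes "\<forall>t. poly Q (poly P t) = t"
  shows "\<exists>a b. b \<noteq> 0 \<and> (\<forall>t. poly P t = a + b * t)"
proof -
  have "pcompose Q P = [:0, 1:]"
    using assms by (intro poly_ext) (simp add: poly_pcompose)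
  then have "degree (pcompose Q P) = 1" by simp
  then have "degree Q * degree P = 1" by (simp add: degree_pcompose)
  then have deg: "degree P = 1" by simp
  then have "P \<noteq> 0" by auto
  then have "coeff P 1 \<noteq> 0" using deg leading_coeff_0_iff by fastforce
  moreover have "poly P t = coeff P 0 + coeff P 1 * t" for t using deg by (simp add: poly_altdef)
  ultimately show ?thesis by blast
qed

lemma poly_fun_C2_affine_in_fst:
  assumes "poly_fun_C2 h" and affine: "\<And>v. \<exists>a b. b \<noteq> 0 \<and> (\<forall>t. h (t, v) = a + b * t)"
  shows "\<exists>c E. c \<noteq> 0 \<and> (\<forall>u v. h (u, v) = c * u + poly E v)"
proof -
  obtain E where E: "\<forall>v. h (0 + v * 0, 0 + v * 1) = poly E v"
    using poly_fun_C2_on_line[OF assms(1)] by blast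
  obtain R where R: "\<forall>v. h (1 + v * 0, 0 + v * 1) = poly R v"
    using poly_fun_C2_on_line[OF assms(1)] by blast
  have slope: "h (u, v) = h (0, v) + (h (1, v) - h (0, v)) * u \<and> h (1, v) - h (0, v) \<noteq> 0" for u v
  proof -
    obtain a b where "b \<noteq> 0" "\<forall>t. h (t, v) = a + b * t" using affine by blast
    then show ?thesis by simp
  qed
  have RE: "poly (R - E) v = h (1, v) - h (0, v)" for v using R E by simp
  have "poly (R - E) v = poly (R - E) 0" for v
    using RE slope by (intro poly_no_roots_constant) metis
  then have "h (u, v) = poly (R - E) 0 * u + poly E v" for u v
  proof -
    have c: "poly (R - E) 0 = h (1, v) - h (0, v)" using RE \<open>poly (R - E) v = poly (R - E) 0\<close> by metis
    have e: "h (0, v) = poly E v" using E by simp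
    have "h (u, v) = h (0, v) + (h (1, v) - h (0, v)) * u" using slope by blast
    then show ?thesis unfolding c e by (simp add: add.commute)
  qed
  moreover have "poly (R - E) 0 \<noteq> 0" using RE slope by metis
  ultimately show ?thesis by blast
qed

section \<open>Restrictions to the diagonal\<close>

text \<open>
  Throughout, \<open>g\<close> describes the restriction of \<open>\<Phi>\<close> to the diagonal matrices,
  \<open>diag(x,y) \<mapsto> diag(g(x,y), g(y,x))\<close>, and \<open>k\<close> that of \<open>\<Phi>\<^sup>-\<^sup>1\<close>.
\<close>

lemma antisymmetric_part_linear:
  fixes g k :: "complex \<times> complex \<Rightarrow> complex"
  assumes pg: "poly_fun_C2 g" and pk: "poly_fun_C2 k"
    and inv: "\<forall>x y. k (g (x, y), g (y, x)) = x"
  shows "\<exists>\<beta>. \<beta> \<noteq> 0 \<and> (\<forall>x y. g (x, y) - g (y, x) = \<beta> * (x - y))"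
proof -
  obtain B where pB: "poly_fun_C2 B" and B: "\<forall>x y. g (x, y) - g (y, x) = (x - y) * B (x, y)"
    using poly_fun_C2_divided_difference[OF poly_fun_C2_diff[OF pg poly_fun_C2_swap[OF pg]]] by auto
  obtain B' where pB': "poly_fun_C2 B'" and B': "\<forall>x y. k (x, y) - k (y, x) = (x - y) * B' (x, y)"
    using poly_fun_C2_divided_difference[OF poly_fun_C2_diff[OF pk poly_fun_C2_swap[OF pk]]] by auto
  define Q where "Q = (\<lambda>p. B p * B' (g p, g (snd p, fst p)) - 1)"
  have pQ: "poly_fun_C2 Q" unfolding Q_def
    by (intro poly_fun_C2_diff pC_const pC_mult pB poly_fun_C2_compose pB' pg poly_fun_C2_swap)
  have "Q (x, y) = 0" if "x \<noteq> y" for x y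
  proof -
    have "(x - y) * 1 = k (g (x, y), g (y, x)) - k (g (y, x), g (x, y))" using inv by simp
    also have "\<dots> = (x - y) * (B (x, y) * B' (g (x, y), g (y, x)))"
      using B B' by simp
    finally show ?thesis using that unfolding Q_def by simp
  qed
  then have "Q p = 0" for p using poly_fun_C2_zero_off_diagonal[OF pQ] by blast
  then have B_nonzero: "\<forall>p. B p \<noteq> 0" unfolding Q_def by (metis mult_zero_left right_minus_eq zero_neq_one)
  then have "B p = B (0, 0)" for p by (rule poly_fun_C2_no_zeros_constant[OF pB])
  then show ?thesis using B B_nonzero by (intro exI[of _ "B (0, 0)"]) (auto simp: mult.commute)
qed

lemma symmetric_part_affine:
  fixes g k :: "complex \<times> complex \<Rightarrow> complex"
  assumes pg: "poly_fun_C2 g" and pk: "poly_fun_C2 k"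
    and inv: "\<forall>x y. k (g (x, y), g (y, x)) = x"
    and antisym: "\<forall>x y. g (x, y) - g (y, x) = \<beta> * (x - y)"
  shows "\<exists>c E. c \<noteq> 0 \<and> (\<forall>x y. g (x, y) + g (y, x) = c * (x + y) + poly E (x - y))"
proof -
  define h where "h = (\<lambda>p. g ((fst p + snd p) / 2, (fst p - snd p) / 2)
                            + g ((fst p - snd p) / 2, (fst p + snd p) / 2))"
  have "poly_fun_C2 (\<lambda>p. (fst p + snd p) / 2)" "poly_fun_C2 (\<lambda>p. (fst p - snd p) / 2)"
    by (intro poly_fun_C2_divide_2 pC_add poly_fun_C2_diff pC_fst pC_snd)+
  then have ph: "poly_fun_C2 h" unfolding h_def
    by (intro pC_add poly_fun_C2_compose pg)
  have "\<exists>a b. b \<noteq> 0 \<and> (\<forall>t. h (t, v) = a + b * t)" for v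
  proof -
    obtain P where P: "\<forall>t. h (0 + t * 1, v + t * 0) = poly P t"
      using poly_fun_C2_on_line[OF ph] by blast
    obtain Q where Q: "\<forall>s. k (\<beta> * v / 2 + s * (1/2), - \<beta> * v / 2 + s * (1/2))
                          + k (- \<beta> * v / 2 + s * (1/2), \<beta> * v / 2 + s * (1/2)) = poly Q s"
      using poly_fun_C2_on_line[OF pC_add[OF pk poly_fun_C2_swap[OF pk]],
          of "\<beta> * v / 2" "1/2" "- \<beta> * v / 2" "1/2"] by auto
    have "poly Q (poly P t) = t" for t
    proof -
      define x y where "x = (t + v) / 2" and "y = (t - v) / 2"
      have "g (x, y) + g (y, x) = poly P t" using P unfolding h_def x_def y_def by simp
      moreover have "x - y = v" unfolding x_def y_def by (simp add: field_simps)
      then have "g (x, y) - g (y, x) = \<beta> * v" using antisym by metis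
      ultimately have "g (x, y) = \<beta> * v / 2 + poly P t * (1/2)"
        and "g (y, x) = - \<beta> * v / 2 + poly P t * (1/2)"
        by (simp_all add: field_simps)
      then have "poly Q (poly P t) = k (g (x, y), g (y, x)) + k (g (y, x), g (x, y))"
        using Q by simp
      also have "\<dots> = t" using inv unfolding x_def y_def by (simp add: field_simps)
      finally show ?thesis .
    qed
    then show ?thesis using poly_affine_if_left_inverse[of Q P] P by auto
  qed
  then obtain c E where "c \<noteq> 0" and "\<forall>u v. h (u, v) = c * u + poly E v"
    using poly_fun_C2_affine_in_fst[OF ph] by blast
  moreover have "g (x, y) + g (y, x) = h (x + y, x - y)" for x y
    unfolding h_def by (simp add: field_simps)
  ultimately show ?thesis by auto
qed

lemma elementary_aut_swap_form:
  fixes g :: "complex \<times> complex \<Rightarrow> complex"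
  assumes "\<beta> \<noteq> 0" "c \<noteq> 0"
    and antisym: "\<forall>x y. g (x, y) - g (y, x) = \<beta> * (x - y)"
    and sym: "\<forall>x y. g (x, y) + g (y, x) = c * (x + y) + poly E (x - y)"
  shows "elementary_aut (\<lambda>p. (g p, g (snd p, fst p)))"
proof -
  define \<psi> where "\<psi> = (\<lambda>p::complex \<times> complex. (fst p + snd p, fst p - snd p))"
  define \<psi>i where "\<psi>i = (\<lambda>p::complex \<times> complex. ((fst p + snd p) / 2, (fst p - snd p) / 2))"
  have "poly_fun_C2 (\<lambda>p. fst p + snd p)" "poly_fun_C2 (\<lambda>p. fst p - snd p)"
    by (intro pC_add poly_fun_C2_diff pC_fst pC_snd)+
  then have "poly_map_C2 \<psi>" "poly_map_C2 \<psi>i"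
    unfolding poly_map_C2_def \<psi>_def \<psi>i_def by (auto intro: poly_fun_C2_divide_2)
  moreover have "\<forall>p. \<psi>i (\<psi> p) = p" "\<forall>p. \<psi> (\<psi>i p) = p"
    unfolding \<psi>_def \<psi>i_def by (auto simp: field_simps)
  ultimately have "poly_aut_C2 \<psi>" unfolding poly_aut_C2_def by blast
  moreover have "(g p, g (snd p, fst p)) = \<psi>i ((\<lambda>(x, y). (c * x + poly E y, \<beta> * y + 0)) (\<psi> p))" for p
  proof -
    obtain x y where p: "p = (x, y)" by (cases p)
    have "g (x, y) = ((g (x, y) + g (y, x)) + (g (x, y) - g (y, x))) / 2"
      and "g (y, x) = ((g (x, y) + g (y, x)) - (g (x, y) - g (y, x))) / 2"
      by (simp_all add: field_simps)
    then show ?thesis unfolding p \<psi>_def \<psi>i_def using sym antisym by simp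
  qed
  ultimately show ?thesis
    unfolding elementary_aut_def using assms(1,2) \<open>\<forall>p. \<psi>i (\<psi> p) = p\<close> \<open>\<forall>p. \<psi> (\<psi>i p) = p\<close>
    by blast
qed

section \<open>Two-by-two matrices and conjugation\<close>

definition m2 :: "complex \<Rightarrow> complex \<Rightarrow> complex \<Rightarrow> complex \<Rightarrow> mat2" where
  "m2 a b c d = (\<chi> i j. if i = 1 then (if j = 1 then a else b) else (if j = 1 then c else d))"

lemma m2_nth [simp]:
  "m2 a b c d $ 1 $ 1 = a" "m2 a b c d $ 1 $ 2 = b" "m2 a b c d $ 2 $ 1 = c" "m2 a b c d $ 2 $ 2 = d"
  by (simp_all add: m2_def)

lemma diagm_nth [simp]:
  "diagm a b $ 1 $ 1 = a" "diagm a b $ 1 $ 2 = 0" "diagm a b $ 2 $ 1 = 0" "diagm a b $ 2 $ 2 = b"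
  by (simp_all add: diagm_def)

lemma mat2_eq_iff:
  "(X::mat2) = Y \<longleftrightarrow> X$1$1 = Y$1$1 \<and> X$1$2 = Y$1$2 \<and> X$2$1 = Y$2$1 \<and> X$2$2 = Y$2$2"
  by (auto simp: vec_eq_iff forall_2)

lemma mat2_eq_m2: "M = m2 (M$1$1) (M$1$2) (M$2$1) (M$2$2)"
  unfolding mat2_eq_iff by simp

lemma matrix_matrix_mult_nth_2: "((A::mat2) ** B) $ i $ j = A$i$1 * B$1$j + A$i$2 * B$2$j"
  by (simp add: matrix_matrix_mult_def sum_2)

lemma invertible_m2:
  assumes "a * d - b * c \<noteq> 0"
  shows "invertible (m2 a b c d)"
  unfolding invertible_right_inverse
proof
  define D where "D = a * d - b * c"
  have "a * (d / D) + b * (- c / D) = (a * d - b * c) / D" "c * (- b / D) + d * (a / D) = (a * d - b * c) / D"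
    by (simp_all add: diff_divide_distrib add_divide_distrib algebra_simps)
  moreover have "(a * d - b * c) / D = 1" using assms unfolding D_def by simp
  ultimately show "m2 a b c d ** m2 (d / D) (- b / D) (- c / D) (a / D) = mat 1"
    unfolding mat2_eq_iff matrix_matrix_mult_nth_2 by (simp add: mat_def algebra_simps)
qed

lemma matrix_inv_2:
  assumes "invertible (A::mat2)"
  shows "A ** matrix_inv A = mat 1" "matrix_inv A ** A = mat 1"
proof -
  have "\<exists>A'. A ** A' = mat 1 \<and> A' ** A = mat 1" using assms unfolding invertible_def by blast
  then have "A ** matrix_inv A = mat 1 \<and> matrix_inv A ** A = mat 1"
    unfolding matrix_inv_def by (rule someI_ex)
  then show "A ** matrix_inv A = mat 1" "matrix_inv A ** A = mat 1" by auto
qed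

lemma compatible_conj_intertwines:
  assumes "compatible_conj \<Phi>" "invertible A" "M ** A = A ** D"
  shows "\<Phi> M ** A = A ** \<Phi> D"
proof -
  note inv = matrix_inv_2[OF assms(2)]
  have "M = A ** D ** matrix_inv A"
    using assms(3) inv by (metis matrix_mul_assoc matrix_mul_rid)
  then have "\<Phi> M = A ** \<Phi> D ** matrix_inv A"
    using assms(1,2) unfolding compatible_conj_def by metis
  then have "\<Phi> M ** A = A ** \<Phi> D ** (matrix_inv A ** A)" by (simp add: matrix_mul_assoc)
  then show ?thesis using inv by simp
qed

lemma compatible_conj_inverse:
  assumes "compatible_conj \<Phi>" "\<forall>M. \<Psi> (\<Phi> M) = M" "\<forall>M. \<Phi> (\<Psi> M) = M"
  shows "compatible_conj \<Psi>"
  unfolding compatible_conj_def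
proof (intro allI impI)
  fix A M :: mat2
  assume "invertible A"
  then have "A ** \<Phi> (\<Psi> M) ** matrix_inv A = \<Phi> (A ** \<Psi> M ** matrix_inv A)"
    using assms(1) unfolding compatible_conj_def by blast
  then have "\<Psi> (A ** M ** matrix_inv A) = \<Psi> (\<Phi> (A ** \<Psi> M ** matrix_inv A))"
    using assms(3) by simp
  then show "A ** \<Psi> M ** matrix_inv A = \<Psi> (A ** M ** matrix_inv A)" using assms(2) by simp
qed

text \<open>Commuting with \<open>diag(1,2)\<close> forces diagonality; conjugating by the transposition
  matrix swaps the diagonal entries.\<close>
lemma compatible_conj_diagm:
  assumes "compatible_conj \<Phi>"
  shows "\<Phi> (diagm x y) = diagm (\<Phi> (diagm x y) $ 1 $ 1) (\<Phi> (diagm y x) $ 1 $ 1)"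
proof -
  have "diagm x y ** m2 1 0 0 2 = m2 1 0 0 2 ** diagm x y"
    unfolding mat2_eq_iff matrix_matrix_mult_nth_2 by simp
  then have c1: "\<Phi> (diagm x y) ** m2 1 0 0 2 = m2 1 0 0 2 ** \<Phi> (diagm x y)"
    by (rule compatible_conj_intertwines[OF assms invertible_m2, rotated]) simp
  have "diagm y x ** m2 0 1 1 0 = m2 0 1 1 0 ** diagm x y"
    unfolding mat2_eq_iff matrix_matrix_mult_nth_2 by simp
  then have c2: "\<Phi> (diagm y x) ** m2 0 1 1 0 = m2 0 1 1 0 ** \<Phi> (diagm x y)"
    by (rule compatible_conj_intertwines[OF assms invertible_m2, rotated]) simp
  show ?thesis
    using c1 c2 unfolding mat2_eq_iff matrix_matrix_mult_nth_2 by simp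
qed

lemma poly_fun_C2_restrict_diagm:
  assumes "poly_fun_M F"
  shows "poly_fun_C2 (\<lambda>p. F (diagm (fst p) (snd p)))"
  using assms
proof induction
  case (pM_coord i j)
  have "(\<lambda>p. diagm (fst p) (snd p) $ i $ j) = (if i = j then (if i = 1 then fst else snd) else (\<lambda>p. 0))"
    by (auto simp: diagm_def)
  then show ?case by (auto intro: pC_fst pC_snd pC_const)
qed (auto intro: poly_fun_C2.intros)

lemma poly_aut_M_diagonal_restriction:
  assumes "poly_aut_M \<Phi>" "compatible_conj \<Phi>"
  obtains g k where "poly_fun_C2 g" "poly_fun_C2 k"
    "\<And>x y. \<Phi> (diagm x y) = diagm (g (x, y)) (g (y, x))"
    "\<forall>x y. k (g (x, y), g (y, x)) = x"
proof -
  obtain \<Psi> where pPhi: "poly_map_M \<Phi>" and pPsi: "poly_map_M \<Psi>"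
    and inv: "\<forall>M. \<Psi> (\<Phi> M) = M" "\<forall>M. \<Phi> (\<Psi> M) = M"
    using assms(1) unfolding poly_aut_M_def by blast
  define g where "g = (\<lambda>p. \<Phi> (diagm (fst p) (snd p)) $ 1 $ 1)"
  define k where "k = (\<lambda>p. \<Psi> (diagm (fst p) (snd p)) $ 1 $ 1)"
  have "poly_fun_C2 g" "poly_fun_C2 k" unfolding g_def k_def
    using pPhi pPsi poly_fun_C2_restrict_diagm unfolding poly_map_M_def by blast+
  moreover have dg: "\<Phi> (diagm x y) = diagm (g (x, y)) (g (y, x))" for x y
    unfolding g_def using compatible_conj_diagm[OF assms(2)] by simp
  moreover have "\<Psi> (diagm x y) = diagm (k (x, y)) (k (y, x))" for x y
    unfolding k_def using compatible_conj_diagm[OF compatible_conj_inverse[OF assms(2) inv]] by simp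
  then have "k (g (x, y), g (y, x)) = x" for x y using inv(1) dg by (metis diagm_nth(1))
  ultimately show ?thesis using that by blast
qed

section \<open>The discriminant\<close>

definition disc :: "mat2 \<Rightarrow> complex" where
  "disc M = (M$1$1 - M$2$2) * (M$1$1 - M$2$2) + 4 * (M$1$2 * M$2$1)"

lemma poly_fun_M_disc: "poly_fun_M disc"
proof -
  have diff: "poly_fun_M (\<lambda>M. M$1$1 + (-1) * M$2$2)" by (intro pM_add pM_mult pM_coord pM_const)
  have "poly_fun_M (\<lambda>M. (M$1$1 + (-1) * M$2$2) * (M$1$1 + (-1) * M$2$2) + 4 * (M$1$2 * M$2$1))"
    by (intro pM_add pM_mult diff pM_coord pM_const)
  then show ?thesis unfolding disc_def[abs_def] by simp
qed

lemma disc_eq_trace_det: "disc M = trace M * trace M - 4 * det M"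
  by (simp add: disc_def trace_def sum_2 det_2 algebra_simps)

lemma disc_similar:
  assumes "invertible A" "X ** A = A ** Y"
  shows "disc X = disc Y"
proof -
  note inv = matrix_inv_2[OF assms(1)]
  have X: "X = A ** (Y ** matrix_inv A)" using assms(2) inv
    by (metis matrix_mul_assoc matrix_mul_rid)
  have "trace X = trace (Y ** matrix_inv A ** A)" unfolding X by (rule trace_mul_sym)
  then have "trace X = trace Y" using inv by (simp add: matrix_mul_assoc[symmetric])
  moreover have "det A \<noteq> 0" using assms(1) invertible_det_nz by blast
  then have "det X = det Y" using assms(2) det_mul by (metis mult.commute mult_left_cancel)
  ultimately show ?thesis by (simp add: disc_eq_trace_det)
qed

lemma diagonalizable_m2:
  assumes "(a - d) * (a - d) + 4 * (b * c) \<noteq> 0"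
  shows "\<exists>A x y. invertible A \<and> m2 a b c d ** A = A ** diagm x y"
proof -
  define s where "s = csqrt ((a - d) * (a - d) + 4 * (b * c))"
  have ss: "s * s = (a - d) * (a - d) + 4 * (b * c)" unfolding s_def by (metis power2_csqrt power2_eq_square)
  have "s \<noteq> 0" using ss assms by auto
  define l1 l2 where "l1 = (a + d + s) / 2" and "l2 = (a + d - s) / 2"
  have eigen: "l * l - (a + d) * l + (a * d - b * c) = 0" if "l \<in> {l1, l2}" for l
    using that ss unfolding l1_def l2_def by (auto simp: field_simps; algebra)
  have "l1 - l2 = s" unfolding l1_def l2_def by (simp add: field_simps)
  consider "b \<noteq> 0" | "b = 0" "c \<noteq> 0" | "b = 0" "c = 0" by blast
  then show ?thesis
  proof cases
    case 1
    have "invertible (m2 b b (l1 - a) (l2 - a))"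
      using 1 \<open>s \<noteq> 0\<close> \<open>l1 - l2 = s\<close> by (intro invertible_m2) (simp add: algebra_simps)
    moreover have eig: "c * b + d * (l - a) = (l - a) * l" if "l \<in> {l1, l2}" for l
      using eigen[OF that] by algebra
    have "m2 a b c d ** m2 b b (l1 - a) (l2 - a) = m2 b b (l1 - a) (l2 - a) ** diagm l1 l2"
      using eig[of l1] eig[of l2] unfolding mat2_eq_iff matrix_matrix_mult_nth_2
      by (simp add: algebra_simps)
    ultimately show ?thesis by blast
  next
    case 2
    have "invertible (m2 (l1 - d) (l2 - d) c c)"
      using 2 \<open>s \<noteq> 0\<close> \<open>l1 - l2 = s\<close> by (intro invertible_m2) (simp add: algebra_simps)
    moreover have eig: "a * (l - d) = (l - d) * l" if "l \<in> {l1, l2}" for l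
      using eigen[OF that] 2 by algebra
    have "m2 a b c d ** m2 (l1 - d) (l2 - d) c c = m2 (l1 - d) (l2 - d) c c ** diagm l1 l2"
      using eig[of l1] eig[of l2] 2 unfolding mat2_eq_iff matrix_matrix_mult_nth_2
      by (simp add: algebra_simps)
    ultimately show ?thesis by blast
  next
    case 3
    have "m2 a b c d ** m2 1 0 0 1 = m2 1 0 0 1 ** diagm a d"
      unfolding mat2_eq_iff matrix_matrix_mult_nth_2 using 3 by simp
    then show ?thesis using invertible_m2[of 1 1 0 0] by fastforce
  qed
qed

lemma diagonalizable_if_disc_nonzero:
  assumes "disc M \<noteq> 0"
  shows "\<exists>A x y. invertible A \<and> M ** A = A ** diagm x y"
  using diagonalizable_m2[of "M$1$1" "M$2$2" "M$1$2" "M$2$1"] assms mat2_eq_m2[of M]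
  unfolding disc_def by metis

text \<open>\<open>m2 e b c (-e)\<close> with \<open>e\<^sup>2 + b c = 0\<close> is a nonzero nilpotent matrix \<open>N\<close>; we commute with the
  invertible unipotent matrix \<open>1 + N\<close> because only invertible matrices can be fed to \<open>\<Phi>\<close>.\<close>
lemma disc_zero_commutes_unipotent:
  assumes "disc M = 0"
  obtains e b c where "e * e + b * c = 0" "e \<noteq> 0 \<or> b \<noteq> 0 \<or> c \<noteq> 0"
    "M ** m2 (1 + e) b c (1 - e) = m2 (1 + e) b c (1 - e) ** M"
proof (cases "M$1$2 = 0 \<and> M$2$1 = 0 \<and> M$1$1 = M$2$2")
  case True
  then have "M ** m2 (1 + 0) 1 0 (1 - 0) = m2 (1 + 0) 1 0 (1 - 0) ** M"
    unfolding mat2_eq_iff matrix_matrix_mult_nth_2 by simp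
  then show ?thesis using that[of 0 1 0] by simp
next
  case False
  define e where "e = (M$1$1 - M$2$2) / 2"
  have "e * e + M$1$2 * M$2$1 = 0"
    using assms unfolding disc_def e_def by (simp add: field_simps)
  moreover have "e \<noteq> 0 \<or> M$1$2 \<noteq> 0 \<or> M$2$1 \<noteq> 0" using False unfolding e_def by auto
  moreover have "M$1$1 = M$2$2 + 2 * e" unfolding e_def by (simp add: field_simps)
  then have "M ** m2 (1 + e) (M$1$2) (M$2$1) (1 - e) = m2 (1 + e) (M$1$2) (M$2$1) (1 - e) ** M"
    unfolding mat2_eq_iff matrix_matrix_mult_nth_2 by (simp add: algebra_simps)
  ultimately show ?thesis using that by blast
qed

text \<open>A matrix commuting with a nonzero nilpotent \<open>N\<close> is a polynomial in \<open>N\<close>, hence has a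
  double eigenvalue.\<close>
lemma disc_zero_if_commutes_unipotent:
  fixes X :: mat2
  assumes nil: "e * e + b * c = 0" and "e \<noteq> 0 \<or> b \<noteq> 0 \<or> c \<noteq> 0"
    and comm: "X ** m2 (1 + e) b c (1 - e) = m2 (1 + e) b c (1 - e) ** X"
  shows "disc X = 0"
proof -
  have h: "X$1$2 * c = b * X$2$1" "2 * e * X$1$2 = b * (X$1$1 - X$2$2)"
      "2 * e * X$2$1 = c * (X$1$1 - X$2$2)"
    using comm unfolding mat2_eq_iff matrix_matrix_mult_nth_2 by (simp_all, algebra+)
  have "b * b * disc X = 0" "c * c * disc X = 0"
    unfolding disc_def using h nil by algebra+
  then show ?thesis using assms(2) nil by auto
qed

lemma disc_compatible_conj:
  assumes cc: "compatible_conj \<Phi>"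
    and diag: "\<And>x y. \<Phi> (diagm x y) = diagm (g (x, y)) (g (y, x))"
    and antisym: "\<forall>x y. g (x, y) - g (y, x) = \<beta> * (x - y)"
  shows "disc (\<Phi> M) = \<beta> * \<beta> * disc M"
proof (cases "disc M = 0")
  case False
  then obtain A x y where A: "invertible A" "M ** A = A ** diagm x y"
    using diagonalizable_if_disc_nonzero by blast
  have "disc (\<Phi> M) = disc (\<Phi> (diagm x y))"
    using disc_similar[OF A(1)] compatible_conj_intertwines[OF cc A] by blast
  also have "\<dots> = (g (x, y) - g (y, x)) * (g (x, y) - g (y, x))"
    unfolding diag disc_def by simp
  also have "\<dots> = \<beta> * \<beta> * disc (diagm x y)"
    unfolding antisym[rule_format] disc_def by (simp add: algebra_simps)
  also have "disc (diagm x y) = disc M" using disc_similar[OF A] by simp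
  finally show ?thesis .
next
  case True
  then obtain e b c where "e * e + b * c = 0" "e \<noteq> 0 \<or> b \<noteq> 0 \<or> c \<noteq> 0"
    and comm: "M ** m2 (1 + e) b c (1 - e) = m2 (1 + e) b c (1 - e) ** M"
    by (rule disc_zero_commutes_unipotent)
  moreover have "(1 + e) * (1 - e) - b * c \<noteq> 0" using \<open>e * e + b * c = 0\<close> by algebra
  ultimately have "disc (\<Phi> M) = 0"
    using compatible_conj_intertwines[OF cc invertible_m2 comm] disc_zero_if_commutes_unipotent
    by blast
  then show ?thesis using True by simp
qed

lemma preserves_fibration_if_scales:
  assumes "\<And>M. L (\<Phi> M) = \<mu> * L M"
  shows "preserves_fibration \<Phi> L"
  unfolding preserves_fibration_def
proof
  fix c
  show "\<exists>c'. \<forall>M. L M = c \<longrightarrow> L (\<Phi> M) = c'"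
    using assms by (intro exI[of _ "\<mu> * c"]) simp
qed

theorem theorem2p9:
  fixes \<Phi> :: "mat2 \<Rightarrow> mat2"
  assumes "poly_aut_M \<Phi>"
    and "compatible_conj \<Phi>"
  shows "elementary_aut (restr_diag \<Phi>) \<and>
         (\<exists>L. poly_fun_M L \<and> preserves_fibration \<Phi> L \<and>
              (\<exists>a b a' b'. L (diagm a b) \<noteq> L (diagm a' b')))"
proof -
  obtain g k where pg: "poly_fun_C2 g" and pk: "poly_fun_C2 k"
    and diag: "\<And>x y. \<Phi> (diagm x y) = diagm (g (x, y)) (g (y, x))"
    and inv: "\<forall>x y. k (g (x, y), g (y, x)) = x"
    using poly_aut_M_diagonal_restriction[OF assms] by metis
  obtain \<beta> where "\<beta> \<noteq> 0" and antisym: "\<forall>x y. g (x, y) - g (y, x) = \<beta> * (x - y)"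
    using antisymmetric_part_linear[OF pg pk inv] by blast
  obtain c E where "c \<noteq> 0" and "\<forall>x y. g (x, y) + g (y, x) = c * (x + y) + poly E (x - y)"
    using symmetric_part_affine[OF pg pk inv antisym] by blast
  moreover have "restr_diag \<Phi> = (\<lambda>p. (g p, g (snd p, fst p)))"
    unfolding restr_diag_def diag by simp
  ultimately have "elementary_aut (restr_diag \<Phi>)"
    using elementary_aut_swap_form[OF \<open>\<beta> \<noteq> 0\<close>] antisym by simp
  moreover have "preserves_fibration \<Phi> disc"
    using disc_compatible_conj[OF assms(2) diag antisym] by (rule preserves_fibration_if_scales)
  moreover have "disc (diagm 1 0) \<noteq> disc (diagm 0 0)" unfolding disc_def by simp
  ultimately show ?thesis using poly_fun_M_disc by blast
qed

end
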